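(* Let $H$ and $K$ be subgroups of a finite group $G$ such that $HK$ is a subgroup. If $H\cap K$ is a perfect code of $K$, then $H$ is a perfect code of $HK$.
   Context: For a group $G$ with identity $e$ and an inverse-closed subset $S\subseteq G\setminus\{e\}$, the Cayley graph $\mathrm{Cay}(G,S)$ has vertex set $G$ and edges $\{g,sg\}$ for $s\in S$, $g\in G$. A perfect code in a graph is an independent set $C$ of vertices such that every vertex outside $C$ is adjacent to exactly one vertex of $C$. A subgroup $H$ of $G$ is a perfect code of $G$ if some Cayley graph of $G$ admits $H$ as a perfect code. *)

theory Defs
  imports "HOL-Algebra.Algebra"
begin

definition connection_set :: "('a, 'b) monoid_scheme \<Rightarrow> 'a set \<Rightarrow> bool" where
  "connection_set G S \<longleftrightarrow> S \<subseteq> carrier G - {\<one>\<^bsub>G\<^esub>} \<and> (\<forall>s\<in>S. inv\<^bsub>G\<^esub> s \<in> S)"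

definition cay_adj :: "('a, 'b) monoid_scheme \<Rightarrow> 'a set \<Rightarrow> 'a \<Rightarrow> 'a \<Rightarrow> bool" where
  "cay_adj G S g h \<longleftrightarrow> g \<in> carrier G \<and> h \<in> carrier G \<and>
     ((\<exists>s\<in>S. h = s \<otimes>\<^bsub>G\<^esub> g) \<or> (\<exists>s\<in>S. g = s \<otimes>\<^bsub>G\<^esub> h))"

definition cay_perfect_code :: "('a, 'b) monoid_scheme \<Rightarrow> 'a set \<Rightarrow> 'a set \<Rightarrow> bool" where
  "cay_perfect_code G S C \<longleftrightarrow> C \<subseteq> carrier G \<and>
     (\<forall>c1\<in>C. \<forall>c2\<in>C. \<not> cay_adj G S c1 c2) \<and>
     (\<forall>v\<in>carrier G - C. \<exists>!c. c \<in> C \<and> cay_adj G S v c)"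

definition subgroup_perfect_code :: "('a, 'b) monoid_scheme \<Rightarrow> 'a set \<Rightarrow> bool" where
  "subgroup_perfect_code G H \<longleftrightarrow> (\<exists>S. connection_set G S \<and> cay_perfect_code G S H)"

end

theory Submission
  imports Defs
begin

text \<open>A subgroup C of Z is a perfect code of Cay(Z, S) exactly when S \<union> {1} is a right
  transversal of C in Z: for g \<notin> C, the map c \<mapsto> c g\<inverse> sends the neighbours of g in C
  bijectively onto S \<inter> C g\<inverse>. A right transversal T \<subseteq> K of H \<inter> K in K is also a right
  transversal of H in HK, because every right coset of H in HK has the form Hk with k \<in> K,
  and Hk \<inter> K = (H \<inter> K)k.\<close>

lemma bij_betw_ex1_mem_iff:
  assumes "bij_betw f A B"
  shows "(\<exists>!a. a \<in> A) \<longleftrightarrow> (\<exists>!b. b \<in> B)"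
proof -
  have "(\<exists>!a. a \<in> A) \<longleftrightarrow> card A = 1" "(\<exists>!b. b \<in> B) \<longleftrightarrow> card B = 1"
    by (auto simp: card_1_singleton_iff)
  then show ?thesis
    using bij_betw_same_card[OF assms] by simp
qed

definition right_transversal :: "('a, 'b) monoid_scheme \<Rightarrow> 'a set \<Rightarrow> 'a set \<Rightarrow> bool" where
  "right_transversal G H T \<longleftrightarrow> T \<subseteq> carrier G \<and> (\<forall>x\<in>carrier G. \<exists>!t. t \<in> T \<inter> (H #>\<^bsub>G\<^esub> x))"

context group
begin

lemma right_transversal_subgroup_iff:
  "right_transversal (G\<lparr>carrier := Z\<rparr>) H T \<longleftrightarrow> T \<subseteq> Z \<and> (\<forall>x\<in>Z. \<exists>!t. t \<in> T \<inter> (H #> x))"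
  unfolding right_transversal_def by simp

lemma connection_set_subgroup_iff:
  assumes "subgroup Z G"
  shows "connection_set (G\<lparr>carrier := Z\<rparr>) S \<longleftrightarrow> S \<subseteq> Z - {\<one>} \<and> (\<forall>s\<in>S. inv s \<in> S)"
  using m_inv_consistent[OF assms] unfolding connection_set_def by (auto 4 3)

lemma cay_adj_subgroup_iff:
  assumes Z: "subgroup Z G" and S: "connection_set (G\<lparr>carrier := Z\<rparr>) S"
  shows "cay_adj (G\<lparr>carrier := Z\<rparr>) S g h \<longleftrightarrow> g \<in> Z \<and> h \<in> Z \<and> h \<otimes> inv g \<in> S"
proof -
  have SG: "S \<subseteq> carrier G" and inv_S: "\<And>s. s \<in> S \<Longrightarrow> inv s \<in> S"
    using S subgroup.subset[OF Z] by (auto simp: connection_set_subgroup_iff[OF Z])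
  have right_mult_iff: "(\<exists>s\<in>S. y = s \<otimes> x) \<longleftrightarrow> y \<otimes> inv x \<in> S"
    if "x \<in> carrier G" "y \<in> carrier G" for x y
  proof
    assume "\<exists>s\<in>S. y = s \<otimes> x"
    then show "y \<otimes> inv x \<in> S"
      using that SG by (auto simp: m_assoc)
  next
    assume "y \<otimes> inv x \<in> S"
    moreover have "y = y \<otimes> inv x \<otimes> x"
      using that by (simp add: m_assoc)
    ultimately show "\<exists>s\<in>S. y = s \<otimes> x" ..
  qed
  have inv_swap: "h \<otimes> inv g \<in> S \<longleftrightarrow> g \<otimes> inv h \<in> S" if "g \<in> carrier G" "h \<in> carrier G"
    using inv_S inv_mult_group[of h "inv g"] inv_mult_group[of g "inv h"] that by (metis inv_closed inv_inv)
  have "((\<exists>s\<in>S. h = s \<otimes> g) \<or> (\<exists>s\<in>S. g = s \<otimes> h)) \<longleftrightarrow> h \<otimes> inv g \<in> S"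
    if "g \<in> Z" "h \<in> Z"
    using that subgroup.subset[OF Z] right_mult_iff[of g h] right_mult_iff[of h g] inv_swap
    by (simp add: subset_iff)
  then show ?thesis
    unfolding cay_adj_def by auto
qed

lemma neighbours_in_subgroup_bij:
  assumes Z: "subgroup Z G" and C: "subgroup C G" "C \<subseteq> Z"
    and S: "connection_set (G\<lparr>carrier := Z\<rparr>) S" and g: "g \<in> Z"
  shows "bij_betw (\<lambda>c. c \<otimes> inv g) {c \<in> C. cay_adj (G\<lparr>carrier := Z\<rparr>) S g c} (S \<inter> (C #> inv g))"
proof (rule bij_betw_byWitness[where f' = "\<lambda>t. t \<otimes> g"])
  have ZG: "Z \<subseteq> carrier G" and SZ: "S \<subseteq> Z"
    using subgroup.subset[OF Z] S by (auto simp: connection_set_subgroup_iff[OF Z])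
  then have gG: "g \<in> carrier G" and CG: "C \<subseteq> carrier G" and SG: "S \<subseteq> carrier G"
    using g C by auto
  note adj = cay_adj_subgroup_iff[OF Z S]
  show "\<forall>c\<in>{c \<in> C. cay_adj (G\<lparr>carrier := Z\<rparr>) S g c}. c \<otimes> inv g \<otimes> g = c"
    using CG gG by (auto simp: m_assoc)
  show "\<forall>t\<in>S \<inter> (C #> inv g). t \<otimes> g \<otimes> inv g = t"
    using SG gG by (auto simp: m_assoc subset_iff)
  show "(\<lambda>c. c \<otimes> inv g) ` {c \<in> C. cay_adj (G\<lparr>carrier := Z\<rparr>) S g c} \<subseteq> S \<inter> (C #> inv g)"
    using adj CG gG by (auto intro: rcosI)
  show "(\<lambda>t. t \<otimes> g) ` (S \<inter> (C #> inv g)) \<subseteq> {c \<in> C. cay_adj (G\<lparr>carrier := Z\<rparr>) S g c}"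
  proof clarify
    fix t assume t: "t \<in> S" "t \<in> C #> inv g"
    then have "t \<otimes> g \<in> C"
      using subgroup.rcos_module[OF C(1) is_group] SG gG by fastforce
    moreover have "t \<otimes> g \<otimes> inv g = t"
      using t SG gG by (auto simp: m_assoc subset_iff)
    ultimately show "t \<otimes> g \<in> C \<and> cay_adj (G\<lparr>carrier := Z\<rparr>) S g (t \<otimes> g)"
      using adj t g C(2) by auto
  qed
qed

lemma cay_independent_subgroup_iff:
  assumes Z: "subgroup Z G" and C: "subgroup C G" "C \<subseteq> Z"
    and S: "connection_set (G\<lparr>carrier := Z\<rparr>) S"
  shows "(\<forall>c1\<in>C. \<forall>c2\<in>C. \<not> cay_adj (G\<lparr>carrier := Z\<rparr>) S c1 c2) \<longleftrightarrow> S \<inter> C = {}"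
proof
  assume independent: "\<forall>c1\<in>C. \<forall>c2\<in>C. \<not> cay_adj (G\<lparr>carrier := Z\<rparr>) S c1 c2"
  have "cay_adj (G\<lparr>carrier := Z\<rparr>) S \<one> s" if "s \<in> S \<inter> C" for s
    using that C subgroup.subset subgroup.one_closed
    by (force simp: cay_adj_subgroup_iff[OF Z S])
  then show "S \<inter> C = {}"
    using independent subgroup.one_closed[OF C(1)] by blast
next
  assume disjoint: "S \<inter> C = {}"
  show "\<forall>c1\<in>C. \<forall>c2\<in>C. \<not> cay_adj (G\<lparr>carrier := Z\<rparr>) S c1 c2"
  proof (intro ballI notI)
    fix c1 c2 assume "c1 \<in> C" "c2 \<in> C" "cay_adj (G\<lparr>carrier := Z\<rparr>) S c1 c2"
    then have "c2 \<otimes> inv c1 \<in> S \<inter> C"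
      using subgroup.m_closed[OF C(1)] subgroup.m_inv_closed[OF C(1)]
      by (simp add: cay_adj_subgroup_iff[OF Z S])
    with disjoint show False
      by blast
  qed
qed

lemma ball_Diff_subgroup_inv_iff:
  assumes Z: "subgroup Z G" and C: "subgroup C G"
  shows "(\<forall>x\<in>Z - C. P x) \<longleftrightarrow> (\<forall>x\<in>Z - C. P (inv x))"
proof -
  have inv_mem: "inv x \<in> Z - C" and inv_inv: "inv (inv x) = x" if "x \<in> Z - C" for x
  proof -
    show "inv (inv x) = x"
      using that subgroup.mem_carrier[OF Z] by simp
    then show "inv x \<in> Z - C"
      using that subgroup.m_inv_closed[OF Z] subgroup.m_inv_closed[OF C, of "inv x"] by auto
  qed
  show ?thesis
    using inv_mem inv_inv by metis
qed

lemma cay_perfect_code_subgroup_iff: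
  assumes Z: "subgroup Z G" and C: "subgroup C G" "C \<subseteq> Z"
    and S: "connection_set (G\<lparr>carrier := Z\<rparr>) S"
  shows "cay_perfect_code (G\<lparr>carrier := Z\<rparr>) S C \<longleftrightarrow>
    right_transversal (G\<lparr>carrier := Z\<rparr>) C (insert \<one> S)"
proof -
  let ?adj = "cay_adj (G\<lparr>carrier := Z\<rparr>) S" and ?T = "insert \<one> S"
  have ZG: "Z \<subseteq> carrier G" and TZ: "?T \<subseteq> Z" and one_S: "\<one> \<notin> S"
    using subgroup.subset[OF Z] subgroup.one_closed[OF Z] S
    by (auto simp: connection_set_subgroup_iff[OF Z])
  have CG: "C \<subseteq> carrier G" and one_C: "\<one> \<in> C"
    using C subgroup.subset subgroup.one_closed by auto
  have coset_self: "(\<exists>!t. t \<in> ?T \<inter> (C #> x)) \<longleftrightarrow> S \<inter> C = {}" if "x \<in> C" for x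
    using coset_join2[OF _ C(1) that] that CG one_C one_S by auto
  have coset_other: "(\<exists>!c. c \<in> C \<and> ?adj g c) \<longleftrightarrow> (\<exists>!t. t \<in> ?T \<inter> (C #> inv g))"
    if g: "g \<in> Z - C" for g
  proof -
    have "\<one> \<notin> C #> inv g"
      using subgroup.rcos_module[OF C(1) is_group] g ZG by auto
    then have "?T \<inter> (C #> inv g) = S \<inter> (C #> inv g)"
      by auto
    then show ?thesis
      using bij_betw_ex1_mem_iff[OF neighbours_in_subgroup_bij[OF Z C S]] g by simp
  qed
  have "cay_perfect_code (G\<lparr>carrier := Z\<rparr>) S C \<longleftrightarrow>
      (\<forall>c1\<in>C. \<forall>c2\<in>C. \<not> ?adj c1 c2) \<and> (\<forall>g\<in>Z - C. \<exists>!c. c \<in> C \<and> ?adj g c)"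
    unfolding cay_perfect_code_def using C(2) by simp
  also have "\<dots> \<longleftrightarrow> S \<inter> C = {} \<and> (\<forall>g\<in>Z - C. \<exists>!t. t \<in> ?T \<inter> (C #> inv g))"
  proof -
    have "(\<forall>g\<in>Z - C. \<exists>!c. c \<in> C \<and> ?adj g c) \<longleftrightarrow> (\<forall>g\<in>Z - C. \<exists>!t. t \<in> ?T \<inter> (C #> inv g))"
      by (rule ball_cong[OF refl]) (rule coset_other)
    then show ?thesis
      using cay_independent_subgroup_iff[OF Z C S] by (simp only:)
  qed
  also have "\<dots> \<longleftrightarrow> (\<forall>x\<in>C. \<exists>!t. t \<in> ?T \<inter> (C #> x)) \<and> (\<forall>x\<in>Z - C. \<exists>!t. t \<in> ?T \<inter> (C #> x))"
  proof -
    have "(\<forall>x\<in>C. \<exists>!t. t \<in> ?T \<inter> (C #> x)) \<longleftrightarrow> S \<inter> C = {}"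
      using coset_self one_C by blast
    then show ?thesis
      using ball_Diff_subgroup_inv_iff[OF Z C(1), of "\<lambda>x. \<exists>!t. t \<in> ?T \<inter> (C #> x)"]
      by (simp only:)
  qed
  also have "\<dots> \<longleftrightarrow> right_transversal (G\<lparr>carrier := Z\<rparr>) C ?T"
    unfolding right_transversal_subgroup_iff using TZ C(2) by blast
  finally show ?thesis .
qed

lemma subgroups_subset_set_mult:
  assumes "subgroup H G" and "subgroup K G"
  shows "H \<subseteq> H <#> K" and "K \<subseteq> H <#> K"
  using assms subgroup.one_closed subgroup.subset unfolding set_mult_def by force+

lemma right_transversal_set_mult:
  assumes H: "subgroup H G" and K: "subgroup K G"
    and T: "right_transversal (G\<lparr>carrier := K\<rparr>) (H \<inter> K) T"
  shows "right_transversal (G\<lparr>carrier := H <#> K\<rparr>) H T"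
  unfolding right_transversal_subgroup_iff
proof (intro conjI ballI)
  have TK: "T \<subseteq> K" and unique: "\<And>k. k \<in> K \<Longrightarrow> \<exists>!t. t \<in> T \<inter> ((H \<inter> K) #> k)"
    using T unfolding right_transversal_subgroup_iff by auto
  have HG: "H \<subseteq> carrier G" and KG: "K \<subseteq> carrier G"
    using H K subgroup.subset by auto
  show "T \<subseteq> H <#> K"
    using TK subgroups_subset_set_mult[OF H K] by blast
  fix x assume "x \<in> H <#> K"
  then obtain h k where h: "h \<in> H" and k: "k \<in> K" and x: "x = h \<otimes> k"
    unfolding set_mult_def by blast
  have "H #> x = H #> k"
    using coset_mult_assoc[OF HG, of h k] coset_join2[OF _ H h] h k x HG KG by auto
  moreover have "T \<inter> (H #> k) = T \<inter> ((H \<inter> K) #> k)"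
  proof -
    have "t \<in> H #> k \<longleftrightarrow> t \<in> (H \<inter> K) #> k" if "t \<in> T" for t
    proof -
      have "t \<in> K" "t \<in> carrier G" "k \<in> carrier G"
        using that TK k KG by auto
      moreover have "t \<otimes> inv k \<in> K"
        using \<open>t \<in> K\<close> k K by (auto intro: subgroup.m_closed subgroup.m_inv_closed)
      ultimately show ?thesis
        using subgroup.rcos_module[OF H is_group]
          subgroup.rcos_module[OF subgroups_Inter_pair[OF H K] is_group] by simp
    qed
    then show ?thesis by blast
  qed
  ultimately show "\<exists>!t. t \<in> T \<inter> (H #> x)"
    using unique[OF k] by simp
qed

lemma subgroup_perfect_code_set_mult:
  assumes H: "subgroup H G" and K: "subgroup K G" and HK: "subgroup (H <#> K) G"
    and code: "subgroup_perfect_code (G\<lparr>carrier := K\<rparr>) (H \<inter> K)"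
  shows "subgroup_perfect_code (G\<lparr>carrier := H <#> K\<rparr>) H"
proof -
  obtain S where S: "connection_set (G\<lparr>carrier := K\<rparr>) S"
    and code_S: "cay_perfect_code (G\<lparr>carrier := K\<rparr>) S (H \<inter> K)"
    using code unfolding subgroup_perfect_code_def by blast
  have S': "connection_set (G\<lparr>carrier := H <#> K\<rparr>) S"
    using S subgroups_subset_set_mult[OF H K]
    by (auto simp: connection_set_subgroup_iff[OF K] connection_set_subgroup_iff[OF HK])
  have "right_transversal (G\<lparr>carrier := K\<rparr>) (H \<inter> K) (insert \<one> S)"
    using code_S cay_perfect_code_subgroup_iff[OF K subgroups_Inter_pair[OF H K] _ S] by blast
  then have "right_transversal (G\<lparr>carrier := H <#> K\<rparr>) H (insert \<one> S)"
    by (rule right_transversal_set_mult[OF H K])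
  then have "cay_perfect_code (G\<lparr>carrier := H <#> K\<rparr>) S H"
    using cay_perfect_code_subgroup_iff[OF HK H subgroups_subset_set_mult(1)[OF H K] S'] by blast
  with S' show ?thesis
    unfolding subgroup_perfect_code_def by blast
qed

end

theorem lemma4p1:
  fixes G :: "('a, 'b) monoid_scheme" and H K :: "'a set"
  assumes "group G" and "finite (carrier G)"
    and "subgroup H G" and "subgroup K G"
    and "subgroup (H <#>\<^bsub>G\<^esub> K) G"
    and "subgroup_perfect_code (G\<lparr>carrier := K\<rparr>) (H \<inter> K)"
  shows "subgroup_perfect_code (G\<lparr>carrier := H <#>\<^bsub>G\<^esub> K\<rparr>) H"
  using group.subgroup_perfect_code_set_mult[OF assms(1,3-6)] .

end
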